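(* Let $\beta_1,\beta_2,P_D,R_{th},r_C,r_D>0$, and write $a=R_{th}/r_C$. Suppose $$r_C>2R_{th}\qquad\text{and}\qquad \beta_1\ln\big((1-2a)r_D\big)-\beta_2P_D\,a\ge 0.$$ Define - $c_1=\min\Big\{\underline{c},\ \dfrac{\beta_1\ln((1-2a)r_D)-\beta_2 aP_D}{1-2a}\Big\}$, - $c_2=\dfrac{\beta_2P_D}{2}+\dfrac{\beta_1\beta_2P_D}{\beta_2P_D-2\beta_1}$, - $\overline{c}=\dfrac{\beta_2P_D}{2}+\beta_1 r_D\,e^{-\left(1+\frac{\beta_2P_D}{2\beta_1}\right)}$, - $\underline{c}=\dfrac{\beta_2P_D}{2}+\dfrac{\beta_1 r_C}{r_C-2R_{th}}$. Let $$\mathcal{C}=\begin{cases}\{c_1,c_2\}, & \text{if } \underline{c}<c_2<\overline{c},\\ \{c_1\}, & \text{if } \overline{c}<\underline{c},\\ \{c_1,\overline{c},\underline{c}\}, & \text{otherwise,}\end{cases}$$ and $c^*=\arg\max_{c\in\mathcal{C}}U_C(\alpha^*(c),c)$. Then $(c^*,\alpha^*(c^* ))$ is the Stackelberg equilibrium. That is, $\alpha^*(\cdot)$ is the follower's best response, and $c^*$ solves the leader's problem $$\max_{c}\ U_C(\alpha^*(c),c)\quad\text{s.t.}\quad U_D(\alpha^*(c),c)\ge 0,\qquad c\ge 0 .$$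
   Context: Setting: a cell-edge user (CEU, the leader) charges price $c$ to a D2D pair (the follower). The D2D pair then chooses its TDMA allocation coefficient $\alpha\in(0,1/2)$. Two time fractions of length $\alpha$ are used to relay the CEU's data, and the remaining fraction $1-2\alpha$ is used for D2D transmission. Rates: - $r_C=\min\{\log_2(1+P_Ch_{ib}/N_0),\ \log_2(1+P_Ch_{ib}/N_0+P_Dg_{jb}/N_0)\}>0$. - The CEU rate is $R_C(\alpha)=\alpha r_C$. - $r_D=\log_2(1+P_Dg_j/N_0)>0$. - The D2D rate is $(1-2\alpha)r_D$. - $R_{th}>0$ is the CEU's rate requirement. Utilities: - D2D pair: $U_D(\alpha,c)=\beta_1\ln\big((1-2\alpha)r_D\big)-\beta_2P_D\alpha-c(1-2\alpha)$. - CEU: $U_C(\alpha,c)=\beta_1\ln(\alpha r_C)+c(1-2\alpha)$. Follower's best response: $\alpha^*(c)$ maximizes $U_D(\alpha,c)$ subject to $\alpha r_C\ge R_{th}$ and $0<\alpha<1/2$. Explicitly, $$\alpha^*(c)=\frac{R_{th}}{r_C}\quad\text{if } c\le \frac{\beta_2P_D}{2}+\frac{\beta_1 r_C}{r_C-2R_{th}},$$ and $\alpha^*(c)=\frac12-\frac{\beta_1}{2c-\beta_2P_D}$ otherwise. *)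

theory Defs
  imports Complex_Main
begin

definition U_D :: "real \<Rightarrow> real \<Rightarrow> real \<Rightarrow> real \<Rightarrow> real \<Rightarrow> real \<Rightarrow> real" where
  "U_D b1 b2 PD rD \<alpha> c = b1 * ln ((1 - 2*\<alpha>) * rD) - b2 * PD * \<alpha> - c * (1 - 2*\<alpha>)"

definition U_C :: "real \<Rightarrow> real \<Rightarrow> real \<Rightarrow> real \<Rightarrow> real" where
  "U_C b1 rC \<alpha> c = b1 * ln (\<alpha> * rC) + c * (1 - 2*\<alpha>)"

definition c_low :: "real \<Rightarrow> real \<Rightarrow> real \<Rightarrow> real \<Rightarrow> real \<Rightarrow> real" where
  "c_low b1 b2 PD Rth rC = b2 * PD / 2 + b1 * rC / (rC - 2*Rth)"

definition c_up :: "real \<Rightarrow> real \<Rightarrow> real \<Rightarrow> real \<Rightarrow> real" where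
  "c_up b1 b2 PD rD = b2 * PD / 2 + b1 * rD * exp (- (1 + b2 * PD / (2*b1)))"

definition c_two :: "real \<Rightarrow> real \<Rightarrow> real \<Rightarrow> real" where
  "c_two b1 b2 PD = b2 * PD / 2 + b1 * b2 * PD / (b2 * PD - 2*b1)"

definition c_one :: "real \<Rightarrow> real \<Rightarrow> real \<Rightarrow> real \<Rightarrow> real \<Rightarrow> real \<Rightarrow> real" where
  "c_one b1 b2 PD Rth rC rD =
     (let a = Rth / rC in
      min (c_low b1 b2 PD Rth rC) ((b1 * ln ((1 - 2*a) * rD) - b2 * a * PD) / (1 - 2*a)))"

definition alpha_star :: "real \<Rightarrow> real \<Rightarrow> real \<Rightarrow> real \<Rightarrow> real \<Rightarrow> real \<Rightarrow> real" where
  "alpha_star b1 b2 PD Rth rC c =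
     (if c \<le> c_low b1 b2 PD Rth rC then Rth / rC
      else 1/2 - b1 / (2*c - b2 * PD))"

definition cand_set :: "real \<Rightarrow> real \<Rightarrow> real \<Rightarrow> real \<Rightarrow> real \<Rightarrow> real \<Rightarrow> real set" where
  "cand_set b1 b2 PD Rth rC rD =
     (let cl = c_low b1 b2 PD Rth rC; cu = c_up b1 b2 PD rD;
          c1 = c_one b1 b2 PD Rth rC rD; c2 = c_two b1 b2 PD in
      if cl < c2 \<and> c2 < cu then {c1, c2}
      else if cu < cl then {c1}
      else {c1, cu, cl})"

end

theory Submission
  imports Defs
begin

text \<open>The D2D utility is concave in \<open>\<alpha>\<close>, so the tangent bound \<open>ln x \<le> ln y + x/y - 1\<close> shows
  that the stationary point, clipped at the rate constraint \<open>\<alpha> \<ge> a\<close>, is the best response.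
  On the interior branch \<open>c \<ge> c_low\<close> the stationarity condition gives
  \<open>c (1 - 2\<alpha>) = \<beta>\<^sub>1 + \<beta>\<^sub>2P\<^sub>D/2 - \<beta>\<^sub>2P\<^sub>D \<alpha>\<close>, which turns the CEU's utility into
  \<open>\<beta>\<^sub>1 ln (\<alpha> r\<^sub>C) - \<beta>\<^sub>2P\<^sub>D \<alpha>\<close> plus a constant: concave in \<open>\<alpha>\<close> with peak at
  \<open>\<alpha> = \<beta>\<^sub>1/(\<beta>\<^sub>2P\<^sub>D)\<close>, attained at \<open>c = c_two\<close>. Since \<open>\<alpha>\<^sup>*\<close> is increasing in \<open>c\<close>
  and the CEU's utility is increasing in \<open>c\<close> on the constant branch, while the admissible
  prices form \<open>[0, c_up]\<close> if \<open>c_low \<le> c_up\<close> and \<open>[0, c_one]\<close> otherwise, the optimum is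
  \<open>c_one\<close>, \<open>c_two\<close>, \<open>c_low\<close> or \<open>c_up\<close> according to the position of \<open>c_two\<close>.\<close>

lemma ln_diff_le_ratio:
  fixes x y :: real
  assumes "0 < x" "0 < y"
  shows "ln x - ln y \<le> x / y - 1"
proof -
  have "ln x - ln y = ln (x / y)" using assms by (simp add: ln_div)
  also have "\<dots> \<le> x / y - 1" using assms by (intro ln_le_minus_one) simp
  finally show ?thesis .
qed

lemma ln_linear_le_tangent:
  fixes b k r x y :: real
  assumes "0 \<le> b" "0 < r" "0 < x" "0 < y"
  shows "b * ln (x * r) - k * x \<le> b * ln (y * r) - k * y + (x - y) * (b / y - k)"
proof -
  have "ln (x * r) - ln (y * r) \<le> (x - y) / y"
    using ln_diff_le_ratio[of "x * r" "y * r"] assms by (simp add: diff_divide_distrib)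
  from mult_left_mono[OF this assms(1)] show ?thesis
    by (simp add: algebra_simps)
qed

lemma U_D_le_tangent:
  assumes "0 \<le> b1" "0 < rD" "\<alpha> < 1/2" "\<beta> < 1/2"
  shows "U_D b1 b2 PD rD \<alpha> c
           \<le> U_D b1 b2 PD rD \<beta> c + (\<alpha> - \<beta>) * (2*c - b2*PD - 2*b1 / (1 - 2*\<beta>))"
  using ln_linear_le_tangent[of b1 rD "1 - 2*\<alpha>" "1 - 2*\<beta>" 0] assms
  unfolding U_D_def by (simp add: algebra_simps diff_divide_distrib)

locale d2d_stackelberg =
  fixes b1 b2 PD Rth rC rD :: real
  assumes pos: "0 < b1" "0 < b2" "0 < PD" "0 < Rth" "0 < rC" "0 < rD"
    and rate_gap: "2 * Rth < rC"
begin

text \<open>\<open>amin\<close> is the paper's \<open>a\<close>, the least allocation meeting the rate requirement, and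
  \<open>K = U_D amin 0\<close>; \<open>K / (1 - 2*amin)\<close> is the price at which the D2D pair's utility at
  allocation \<open>amin\<close> drops to zero.\<close>

abbreviation "amin \<equiv> Rth / rC"
abbreviation "\<kappa> \<equiv> b2 * PD"
abbreviation "K \<equiv> b1 * ln ((1 - 2 * amin) * rD) - \<kappa> * amin"
abbreviation "cl \<equiv> c_low b1 b2 PD Rth rC"
abbreviation "cu \<equiv> c_up b1 b2 PD rD"
abbreviation "c1 \<equiv> c_one b1 b2 PD Rth rC rD"
abbreviation "c2 \<equiv> c_two b1 b2 PD"
abbreviation "response \<equiv> alpha_star b1 b2 PD Rth rC"
abbreviation "interior_response c \<equiv> 1/2 - b1 / (2*c - \<kappa>)"
abbreviation "leader_payoff c \<equiv> U_C b1 rC (response c) c"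
abbreviation "pair_payoff c \<equiv> U_D b1 b2 PD rD (response c) c"
abbreviation "feasible c \<equiv> 0 \<le> c \<and> 0 \<le> pair_payoff c"

lemma amin_bounds: "0 < amin" "amin < 1/2"
  using pos rate_gap by (auto simp: field_simps)

lemma min_share_pos: "0 < 1 - 2*amin"
  using amin_bounds(2) by linarith

lemma kappa_pos: "0 < \<kappa>"
  using pos by simp

lemma c_low_margin: "2*cl - \<kappa> = 2*b1 / (1 - 2*amin)"
proof -
  have "1 - 2*amin = (rC - 2*Rth) / rC"
    using pos by (simp add: field_simps)
  then show ?thesis
    unfolding c_low_def using pos rate_gap by simp
qed

lemma c_low_margin_pos: "0 < 2*cl - \<kappa>"
  unfolding c_low_margin using amin_bounds pos by simp

lemma interior_response_c_low: "interior_response cl = amin"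
  unfolding c_low_margin using amin_bounds pos by (simp add: field_simps)

lemma response_below: "c \<le> cl \<Longrightarrow> response c = amin"
  unfolding alpha_star_def by simp

lemma response_above: "cl \<le> c \<Longrightarrow> response c = interior_response c"
  using interior_response_c_low unfolding alpha_star_def by auto

lemma interior_response_mono: "\<kappa>/2 < c \<Longrightarrow> c \<le> c' \<Longrightarrow> interior_response c \<le> interior_response c'"
  using pos by (simp add: divide_left_mono)

lemma interior_share:
  assumes "cl \<le> c"
  shows "0 < 2*c - \<kappa>" "1 - 2 * interior_response c = 2*b1 / (2*c - \<kappa>)"
  using assms c_low_margin_pos by (auto simp: field_simps)

lemma interior_response_bounds:
  assumes "cl \<le> c"
  shows "amin \<le> interior_response c" "interior_response c < 1/2"
  using interior_response_mono[of cl c] interior_response_c_low interior_share[OF assms]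
    c_low_margin_pos assms pos by auto

lemma interior_response_pos: "cl \<le> c \<Longrightarrow> 0 < interior_response c"
  using interior_response_bounds(1) amin_bounds(1) by (meson less_le_trans)

lemma response_bounds: "amin \<le> response c" "response c < 1/2"
  using response_below response_above interior_response_bounds amin_bounds
  by (cases "c \<le> cl"; force)+

lemma response_first_order:
  assumes "amin \<le> \<alpha>"
  shows "(\<alpha> - response c) * (2*c - \<kappa> - 2*b1 / (1 - 2 * response c)) \<le> 0"
proof (cases "c \<le> cl")
  case True
  then have "2*c - \<kappa> - 2*b1 / (1 - 2 * response c) = 2 * (c - cl)"
    using response_below c_low_margin by simp
  then show ?thesis
    using True assms response_below by (simp add: mult_nonneg_nonpos)
next
  case False
  then have "1 - 2 * response c = 2*b1 / (2*c - \<kappa>)" "0 < 2*c - \<kappa>"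
    using response_above interior_share[of c] by auto
  then have "2*b1 / (1 - 2 * response c) = 2*c - \<kappa>"
    using pos by simp
  then show ?thesis by simp
qed

lemma follower_best_response:
  "0 < response c \<and> response c < 1/2 \<and> response c * rC \<ge> Rth
   \<and> (\<forall>\<alpha>. 0 < \<alpha> \<and> \<alpha> < 1/2 \<and> \<alpha> * rC \<ge> Rth \<longrightarrow>
          U_D b1 b2 PD rD \<alpha> c \<le> pair_payoff c)"
proof -
  have rate_requirement_iff: "\<alpha> * rC \<ge> Rth \<longleftrightarrow> amin \<le> \<alpha>" for \<alpha>
    using pos by (simp add: field_simps)
  have "U_D b1 b2 PD rD \<alpha> c \<le> pair_payoff c" if "amin \<le> \<alpha>" "\<alpha> < 1/2" for \<alpha>
    using U_D_le_tangent[of b1 rD \<alpha> "response c" b2 PD c] response_first_order[OF that(1), of c]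
      response_bounds[of c] that(2) pos by linarith
  moreover have "0 < response c"
    using response_bounds(1)[of c] amin_bounds(1) by linarith
  ultimately show ?thesis
    using response_bounds rate_requirement_iff by simp
qed

lemma price_share_above:
  assumes "cl \<le> c"
  shows "c * (1 - 2 * interior_response c) = b1 + \<kappa>/2 - \<kappa> * interior_response c"
  using interior_share[OF assms] by (simp add: field_simps)

lemma leader_payoff_above:
  assumes "cl \<le> c"
  shows "leader_payoff c
           = b1 * ln (interior_response c * rC) - \<kappa> * interior_response c + b1 + \<kappa>/2"
  unfolding U_C_def response_above[OF assms] price_share_above[OF assms] by simp

lemma leader_payoff_above_le:
  assumes "cl \<le> c" "cl \<le> c'"
    and "(interior_response c - interior_response c') * (b1 / interior_response c' - \<kappa>) \<le> 0"
  shows "leader_payoff c \<le> leader_payoff c'"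
proof -
  have "0 < interior_response c" "0 < interior_response c'"
    using interior_response_pos assms(1,2) by auto
  then show ?thesis
    using ln_linear_le_tangent[of b1 rC "interior_response c" "interior_response c'" \<kappa>] assms pos
    unfolding leader_payoff_above[OF assms(1)] leader_payoff_above[OF assms(2)] by simp
qed

lemma leader_payoff_below_mono:
  assumes "c \<le> c'" "c' \<le> cl"
  shows "leader_payoff c \<le> leader_payoff c'"
proof -
  have "c * (1 - 2*amin) \<le> c' * (1 - 2*amin)"
    using assms amin_bounds(2) by (intro mult_right_mono) linarith+
  then show ?thesis
    unfolding U_C_def using assms response_below by simp
qed

lemma pair_payoff_below: "c \<le> cl \<Longrightarrow> pair_payoff c = K - c * (1 - 2*amin)"
  unfolding U_D_def using response_below by (simp add: algebra_simps)

lemma pair_payoff_above: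
  assumes "cl \<le> c"
  shows "pair_payoff c = b1 * ln (2*b1*rD / (2*c - \<kappa>)) - \<kappa>/2 - b1"
proof -
  have payoff: "pair_payoff c
          = b1 * ln ((1 - 2 * interior_response c) * rD) - \<kappa> * interior_response c
            - c * (1 - 2 * interior_response c)"
    unfolding U_D_def response_above[OF assms] by simp
  have share: "(1 - 2 * interior_response c) * rD = 2*b1*rD / (2*c - \<kappa>)"
    unfolding interior_share(2)[OF assms] by simp
  show ?thesis
    using payoff price_share_above[OF assms] unfolding share by linarith
qed

lemma pair_payoff_above_nonneg_iff:
  assumes "cl \<le> c"
  shows "0 \<le> pair_payoff c \<longleftrightarrow> c \<le> cu"
proof -
  define E where "E = exp (1 + \<kappa>/(2*b1))"
  have margin: "0 < 2*c - \<kappa>"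
    using interior_share(1)[OF assms] .
  have cu_eq: "cu = \<kappa>/2 + b1*rD/E"
    unfolding c_up_def E_def exp_minus inverse_eq_divide by simp
  have "0 \<le> pair_payoff c \<longleftrightarrow> 1 + \<kappa>/(2*b1) \<le> ln (2*b1*rD / (2*c - \<kappa>))"
    unfolding pair_payoff_above[OF assms] using pos by (simp add: field_simps)
  also have "\<dots> \<longleftrightarrow> E \<le> 2*b1*rD / (2*c - \<kappa>)"
    unfolding E_def using margin pos by (subst ln_ge_iff) auto
  also have "\<dots> \<longleftrightarrow> c \<le> cu"
    unfolding cu_eq E_def using margin by (simp add: field_simps)
  finally show ?thesis .
qed

lemma c_one_eq: "c1 = min cl (K / (1 - 2*amin))"
  unfolding c_one_def Let_def by (simp add: ac_simps)

lemma c_low_le_c_up_iff: "cl \<le> cu \<longleftrightarrow> cl \<le> K / (1 - 2*amin)"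
proof -
  have "cl \<le> cu \<longleftrightarrow> 0 \<le> K - cl * (1 - 2*amin)"
    using pair_payoff_above_nonneg_iff[of cl] pair_payoff_below[of cl] by simp
  also have "\<dots> \<longleftrightarrow> cl \<le> K / (1 - 2*amin)"
    using pos_le_divide_eq[OF min_share_pos] by simp
  finally show ?thesis .
qed

lemma c_two_above:
  assumes "2*b1 < \<kappa>"
  shows "\<kappa>/2 < c2" "\<kappa> * interior_response c2 = b1"
proof -
  have c2_eq: "c2 = \<kappa>/2 + b1*\<kappa> / (\<kappa> - 2*b1)"
    unfolding c_two_def by simp
  show "\<kappa>/2 < c2"
    unfolding c2_eq using assms pos by simp
  show "\<kappa> * interior_response c2 = b1"
    unfolding c2_eq using assms pos by (simp add: field_simps)
qed

lemma c_two_below: "\<kappa> \<le> 2*b1 \<Longrightarrow> c2 \<le> \<kappa>/2"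
  unfolding c_two_def using pos by (simp add: divide_nonneg_nonpos)

lemma feasible_c_low_c_up: "cl \<le> cu \<Longrightarrow> feasible cl \<and> feasible cu"
  using pair_payoff_above_nonneg_iff[of cl] pair_payoff_above_nonneg_iff[of cu]
    c_low_margin_pos kappa_pos by simp

lemma feasible_above_le_c_up: "feasible c \<Longrightarrow> cl \<le> c \<Longrightarrow> c \<le> cu"
  using pair_payoff_above_nonneg_iff by blast

lemma leader_optimum_c_one:
  assumes "cu < cl" "feasible c"
  shows "leader_payoff c \<le> leader_payoff c1"
proof -
  have c1_eq: "c1 = K / (1 - 2*amin)"
    using assms(1) c_low_le_c_up_iff c_one_eq by simp
  have "c \<le> cl"
    using assms feasible_above_le_c_up by force
  then have "c * (1 - 2*amin) \<le> K"
    using assms(2) pair_payoff_below by simp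
  then have "c \<le> c1"
    unfolding c1_eq using pos_le_divide_eq[OF min_share_pos] by simp
  then show ?thesis
    using leader_payoff_below_mono c_one_eq by simp
qed

lemma leader_optimum_if_dominates_interior:
  assumes "cl \<le> cu" "feasible c"
    and above: "\<And>c. cl \<le> c \<Longrightarrow> c \<le> cu \<Longrightarrow> leader_payoff c \<le> leader_payoff m"
  shows "leader_payoff c \<le> leader_payoff m"
proof (cases "c \<le> cl")
  case True
  then show ?thesis
    using leader_payoff_below_mono[of c cl] above[of cl] assms(1) by simp
next
  case False
  then show ?thesis
    using above feasible_above_le_c_up assms(2) by simp
qed

lemma leader_optimum_c_two:
  assumes "cl < c2" "c2 < cu" "feasible c"
  shows "leader_payoff c \<le> leader_payoff c2"
proof -
  have "2*b1 < \<kappa>"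
    using c_two_below c_low_margin_pos assms(1) by fastforce
  then have "b1 / interior_response c2 - \<kappa> = 0"
    using c_two_above interior_response_pos[of c2] assms(1) by (simp add: field_simps)
  then show ?thesis
    using assms leader_payoff_above_le[of _ c2] leader_optimum_if_dominates_interior[of c c2] by simp
qed

lemma leader_optimum_c_up:
  assumes "cl \<le> cu" "\<kappa> * interior_response cu \<le> b1" "feasible c"
  shows "leader_payoff c \<le> leader_payoff cu"
proof (rule leader_optimum_if_dominates_interior[OF assms(1,3)])
  fix c' assume c': "cl \<le> c'" "c' \<le> cu"
  have "interior_response c' \<le> interior_response cu"
    using interior_response_mono c_low_margin_pos c' by simp
  moreover have "0 \<le> b1 / interior_response cu - \<kappa>"
    using assms(1,2) interior_response_pos[of cu] by (simp add: field_simps)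
  ultimately show "leader_payoff c' \<le> leader_payoff cu"
    using leader_payoff_above_le c' assms(1) by (simp add: mult_nonpos_nonneg)
qed

lemma leader_optimum_c_low:
  assumes "b1 \<le> \<kappa> * interior_response cl" "feasible c"
  shows "leader_payoff c \<le> leader_payoff cl"
proof (cases "c \<le> cl")
  case True
  then show ?thesis
    using leader_payoff_below_mono by simp
next
  case False
  have "b1 / interior_response cl - \<kappa> \<le> 0"
    using assms(1) interior_response_pos[of cl] by (simp add: field_simps)
  moreover have "interior_response cl \<le> interior_response c"
    using interior_response_mono c_low_margin_pos False by simp
  ultimately show ?thesis
    using leader_payoff_above_le False by (simp add: mult_nonneg_nonpos)
qed

lemma leader_peak_position:
  assumes "cl \<le> cu" "\<not> (cl < c2 \<and> c2 < cu)"
  shows "\<kappa> * interior_response cu \<le> b1 \<or> b1 \<le> \<kappa> * interior_response cl"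
proof -
  have cl_gt: "\<kappa>/2 < cl"
    using c_low_margin_pos by simp
  consider "\<kappa> \<le> 2*b1" | "2*b1 < \<kappa>" "cu \<le> c2" | "2*b1 < \<kappa>" "c2 \<le> cl"
    using assms(2) by linarith
  then show ?thesis
  proof cases
    case 1
    have "0 \<le> \<kappa> * (b1 / (2*cu - \<kappa>))"
      using interior_share(1)[of cu] assms(1) pos by simp
    then show ?thesis
      using 1 by (simp add: right_diff_distrib)
  next
    case 2
    have "\<kappa> * interior_response cu \<le> \<kappa> * interior_response c2"
      using interior_response_mono[of cu c2] 2 cl_gt assms(1) kappa_pos by (intro mult_left_mono) auto
    then show ?thesis
      using c_two_above(2)[OF 2(1)] by simp
  next
    case 3
    have "\<kappa> * interior_response c2 \<le> \<kappa> * interior_response cl"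
      using interior_response_mono[of c2 cl] 3 c_two_above(1) kappa_pos by (intro mult_left_mono) auto
    then show ?thesis
      using c_two_above(2)[OF 3(1)] by simp
  qed
qed

lemma cand_set_feasible:
  assumes "0 \<le> K" "c \<in> cand_set b1 b2 PD Rth rC rD"
  shows "feasible c"
proof (cases "cu < cl")
  case True
  then have "c = c1"
    using assms(2) unfolding cand_set_def Let_def by (auto split: if_splits)
  moreover have "c1 = K / (1 - 2*amin)" "c1 \<le> cl"
    using True c_low_le_c_up_iff c_one_eq by auto
  ultimately show ?thesis
    using assms(1) pair_payoff_below[of c1] min_share_pos rate_gap by simp
next
  case False
  then have "c1 = cl"
    using c_low_le_c_up_iff c_one_eq by simp
  then have "c = cl \<or> c = cu \<or> (cl < c \<and> c < cu)"
    using assms(2) False unfolding cand_set_def Let_def by (auto split: if_splits)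
  then show ?thesis
    using feasible_c_low_c_up pair_payoff_above_nonneg_iff[of c] c_low_margin_pos kappa_pos False
    by fastforce
qed

lemma cand_set_optimum:
  "\<exists>m \<in> cand_set b1 b2 PD Rth rC rD. \<forall>c. feasible c \<longrightarrow> leader_payoff c \<le> leader_payoff m"
proof (cases "cu < cl")
  case True
  then show ?thesis
    using leader_optimum_c_one unfolding cand_set_def Let_def by auto
next
  case False
  then have c1_eq: "c1 = cl"
    using c_low_le_c_up_iff c_one_eq by simp
  show ?thesis
  proof (cases "cl < c2 \<and> c2 < cu")
    case True
    then show ?thesis
      using leader_optimum_c_two unfolding cand_set_def Let_def by auto
  next
    case interior: False
    then have "cand_set b1 b2 PD Rth rC rD = {cl, cu}"
      using False c1_eq unfolding cand_set_def Let_def by auto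
    then show ?thesis
      using leader_peak_position[OF _ interior] leader_optimum_c_up leader_optimum_c_low False
      by (metis insert_iff not_less)
  qed
qed

end

theorem theorem1:
  fixes b1 b2 PD Rth rC rD cstar :: real
  assumes pos: "b1 > 0" "b2 > 0" "PD > 0" "Rth > 0" "rC > 0" "rD > 0"
    and hr: "rC > 2 * Rth"
    and hnn: "b1 * ln ((1 - 2 * (Rth / rC)) * rD) - b2 * PD * (Rth / rC) \<ge> 0"
    and hcand: "cstar \<in> cand_set b1 b2 PD Rth rC rD"
    and hmax: "\<forall>c \<in> cand_set b1 b2 PD Rth rC rD.
                 U_C b1 rC (alpha_star b1 b2 PD Rth rC c) c
                 \<le> U_C b1 rC (alpha_star b1 b2 PD Rth rC cstar) cstar"
  shows "(\<forall>c. 0 < alpha_star b1 b2 PD Rth rC c \<and> alpha_star b1 b2 PD Rth rC c < 1/2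
              \<and> alpha_star b1 b2 PD Rth rC c * rC \<ge> Rth
              \<and> (\<forall>\<alpha>. 0 < \<alpha> \<and> \<alpha> < 1/2 \<and> \<alpha> * rC \<ge> Rth \<longrightarrow>
                    U_D b1 b2 PD rD \<alpha> c \<le> U_D b1 b2 PD rD (alpha_star b1 b2 PD Rth rC c) c))
       \<and> cstar \<ge> 0
       \<and> U_D b1 b2 PD rD (alpha_star b1 b2 PD Rth rC cstar) cstar \<ge> 0
       \<and> (\<forall>c. c \<ge> 0 \<and> U_D b1 b2 PD rD (alpha_star b1 b2 PD Rth rC c) c \<ge> 0 \<longrightarrow>
              U_C b1 rC (alpha_star b1 b2 PD Rth rC c) c
              \<le> U_C b1 rC (alpha_star b1 b2 PD Rth rC cstar) cstar)"
proof -
  interpret d2d_stackelberg b1 b2 PD Rth rC rD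
    using pos hr by unfold_locales auto
  obtain m where "m \<in> cand_set b1 b2 PD Rth rC rD"
    and m_best: "\<forall>c. feasible c \<longrightarrow> leader_payoff c \<le> leader_payoff m"
    using cand_set_optimum by blast
  then have "leader_payoff c \<le> leader_payoff cstar" if "feasible c" for c
    using hmax that by (meson order_trans)
  moreover have "feasible cstar"
    using cand_set_feasible[OF hnn hcand] .
  ultimately show ?thesis
    using follower_best_response by blast
qed

end
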